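(* Let $\tau=[0;\overline{b_1,b_2,\dots,b_s}]$ be a quadratic power series whose shortest periodic part is $b_1,\dots,b_s$. Let $f=[a_0;a_1,a_2,\dots]\in\widehat K\setminus(K\cup\Theta_\tau)$. For a positive integer $r$ with $a_r\ne b_s$, set $\alpha_r=[a_0;a_1,\dots,a_r,\overline{b_1,\dots,b_{s-1},b_s}]$, and write $\rho_r=\frac{|f-\alpha_r|}{|\alpha_r-\alpha_r^\sigma|}$. (i) If $a_{r+1}\ne b_1$, then $-\log_q\rho_r=\deg a_r+\deg b_s-\deg(a_r-b_s)+\deg a_{r+1}+\deg b_1-\deg(a_{r+1}-b_1).$ (ii) If $a_{r+1}=b_1$, let $t$ be the largest integer such that the word $a_{r+1}\cdots a_{r+t}$ coincides with the prefix of length $t$ of the infinite word $(b_1\cdots b_s)^\infty$; let $s_0\in\{1,\dots,s\}$ be such that $a_{r+t}=b_{s_0}$ is the $t$-th letter of this infinite word (i.e. $s_0\equiv t \bmod s$), and put $s'=s_0+1$ if $s_0<s$ and $s'=1$ otherwise. Then $-\log_q\rho_r=2\sum_{j=1}^t\deg a_{r+j}+\deg a_r+\deg b_s-\deg(a_r-b_s)+\deg a_{r+t+1}+\deg b_{s'}-\deg(a_{r+t+1}-b_{s'}).$ In particular, in both cases $\rho_r\le q^{-2}$. Furthermore, putting $t=0$ and $s'=1$ when $a_{r+1}\ne b_1$: if $\deg a_r\ne\deg b_s$ and $\deg a_{r+t+1}\ne\deg b_{s'}$, then $-\log_q\rho_r=2\sum_{j=1}^t\deg a_{r+j}+\min\{\deg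 a_r,\deg b_s\}+\min\{\deg a_{r+t+1},\deg b_{s'}\}.$
   Context: $q$ is a positive power of a prime, $R=\mathbb F_q[Y]$, $K=\mathbb F_q(Y)$, $\widehat K=\mathbb F_q((Y^{-1}))$ with absolute value $|P/Q|=q^{\deg P-\deg Q}$ extended to $\widehat K$ (the paper writes $\mathrm v(x)=-\log x/\log q$ for the corresponding valuation). $[a_0;a_1,a_2,\dots]$ denotes the continued fraction $a_0+1/(a_1+1/(a_2+\cdots))$ with $a_0\in R$ and $a_i$ ($i\ge1$) nonconstant polynomials; an overline indicates a block repeated infinitely often. For a quadratic power series $\gamma$, $\gamma^\sigma$ is its Galois conjugate over $K$, and $\Theta_\gamma=\mathrm{PGL}_2(R)\cdot\{\gamma,\gamma^\sigma\}$ under the action by homographies on $\widehat K\cup\{\infty\}$. *)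

theory Defs
  imports Complex_Main "HOL-Library.Cardinality" "HOL-Computational_Algebra.Polynomial" "HOL-Computational_Algebra.Formal_Laurent_Series"
begin

text \<open>Model: the completion F_q((Y^-1)) is the type of formal Laurent series 'a fls in the
variable X = Y^-1 (finitely many negative powers of X), over a finite field 'a with q = CARD('a).
The polynomial variable Y is fls_X_inv.  The valuation v is fls_subdegree and the topology is
the library metric on fls (which induces the Y^-1-adic topology).\<close>

definition emb :: "'a::field poly \<Rightarrow> 'a fls" where
  "emb p = (\<Sum>i\<le>degree p. fls_const (coeff p i) * fls_X_inv ^ i)"

definition absv :: "'a::{finite,field} fls \<Rightarrow> real" where
  "absv x = (if x = 0 then 0 else real (CARD('a)) powr (- of_int (fls_subdegree x)))"

definition in_K :: "'a::field fls \<Rightarrow> bool" where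
  "in_K x \<longleftrightarrow> (\<exists>P Q. Q \<noteq> 0 \<and> x = emb P / emb Q)"

primrec cf_fin :: "(nat \<Rightarrow> 'a::field poly) \<Rightarrow> nat \<Rightarrow> 'a fls" where
  "cf_fin a 0 = emb (a 0)"
| "cf_fin a (Suc n) = emb (a 0) + 1 / cf_fin (\<lambda>i. a (Suc i)) n"

definition cf_value :: "(nat \<Rightarrow> 'a::field poly) \<Rightarrow> 'a fls" where
  "cf_value a = lim (cf_fin a)"

definition cf_admissible :: "(nat \<Rightarrow> 'a::field poly) \<Rightarrow> bool" where
  "cf_admissible a \<longleftrightarrow> (\<forall>i\<ge>1. degree (a i) \<ge> 1)"

text \<open>The infinite word (b_1 ... b_s)^infty, indexed from 1; position 0 holds 0.\<close>
definition per_word :: "(nat \<Rightarrow> 'a::zero) \<Rightarrow> nat \<Rightarrow> nat \<Rightarrow> 'a" where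
  "per_word b s n = (if n = 0 then 0 else b (((n - 1) mod s) + 1))"

definition alpha_seq :: "(nat \<Rightarrow> 'a::zero) \<Rightarrow> (nat \<Rightarrow> 'a) \<Rightarrow> nat \<Rightarrow> nat \<Rightarrow> nat \<Rightarrow> 'a" where
  "alpha_seq a b s r n = (if n \<le> r then a n else b (((n - r - 1) mod s) + 1))"

definition shortest_period :: "(nat \<Rightarrow> 'a) \<Rightarrow> nat \<Rightarrow> bool" where
  "shortest_period b s \<longleftrightarrow> s \<ge> 1 \<and>
     (\<forall>s'. 0 < s' \<and> s' < s \<longrightarrow>
        \<not> (\<forall>n\<ge>1. b (((n + s' - 1) mod s) + 1) = b (((n - 1) mod s) + 1)))"

definition quadratic :: "'a::field fls \<Rightarrow> bool" where
  "quadratic x \<longleftrightarrow> \<not> in_K x \<and>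
     (\<exists>A B C. A \<noteq> 0 \<and> emb A * x ^ 2 + emb B * x + emb C = 0)"

definition galois_conj :: "'a::field fls \<Rightarrow> 'a fls" where
  "galois_conj x = (SOME y. \<exists>A B C. A \<noteq> 0 \<and> emb A * x ^ 2 + emb B * x + emb C = 0
                              \<and> y = - emb B / emb A - x)"

text \<open>Theta_gamma = PGL_2(R) . {gamma, gamma^sigma}, intersected with K-hat (the point at
infinity and rational points never matter here since they are only hit from rational points).\<close>
definition Theta :: "'a::field fls \<Rightarrow> 'a fls set" where
  "Theta g = {(emb a * x + emb b) / (emb c * x + emb d) | a b c d x.
               a * d - b * c \<noteq> 0 \<and> degree (a * d - b * c) = 0 \<and>
               (x = g \<or> x = galois_conj g) \<and> emb c * x + emb d \<noteq> 0}"

definition prefix_match :: "(nat \<Rightarrow> 'a::zero) \<Rightarrow> (nat \<Rightarrow> 'a) \<Rightarrow> nat \<Rightarrow> nat \<Rightarrow> nat \<Rightarrow> bool" where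
  "prefix_match a b s r t \<longleftrightarrow> (\<forall>j\<in>{1..t}. a (r + j) = per_word b s j)"

definition largest_match :: "(nat \<Rightarrow> 'a::zero) \<Rightarrow> (nat \<Rightarrow> 'a) \<Rightarrow> nat \<Rightarrow> nat \<Rightarrow> nat \<Rightarrow> bool" where
  "largest_match a b s r t \<longleftrightarrow> prefix_match a b s r t \<and> (\<forall>t'. prefix_match a b s r t' \<longrightarrow> t' \<le> t)"

definition s0_of :: "nat \<Rightarrow> nat \<Rightarrow> nat" where
  "s0_of s t = (if t mod s = 0 then s else t mod s)"

definition s'_of :: "nat \<Rightarrow> nat \<Rightarrow> nat" where
  "s'_of s t = (if s0_of s t < s then s0_of s t + 1 else 1)"

end

(*
  Write \<alpha>_r = [a_0; ..., a_r, \<beta>] with \<beta> = [b_1; b_2, ...] purely periodic. By Galois' theorem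
  the conjugate of \<beta> is -1/[b_s; b_(s-1), ...], so \<alpha>_r^\<sigma> = [a_0; ..., a_r, -1/[b_s; ...]].
  Then -log_q \<rho>_r = v(f - \<alpha>_r) - v(\<alpha>_r - \<alpha>_r^\<sigma>), and both valuations are computed by
  peeling off the partial quotients the two expansions share: by v(1/x - 1/y) = v(x - y) - v(x) - v(y)
  each shared quotient c contributes 2 deg c, and the first disagreement between p and q contributes
  deg p + deg q - deg (p - q) \<ge> 1.  The shared block a_1, ..., a_r cancels in the difference, which
  leaves the stated formula; for f the block extends over the t quotients matching the period.
  The hypothesis f \<notin> \<Theta>_\<tau> makes t finite, since otherwise f = \<alpha>_r is an image of \<tau> under
  PGL_2(R).
*)
theory Submission
  imports Defs
begin

unbundle fps_syntax

section \<open>The embedding of polynomials into Laurent series\<close>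

lemma emb_nth: "emb p $$ k = (if k \<le> 0 then coeff p (nat (-k)) else 0)"
proof -
  have "emb p $$ k = (\<Sum>i\<le>degree p. coeff p i * (if k = - int i then 1 else 0))"
    unfolding emb_def fls_nth_sum by (simp add: fls_X_inv_power_nth)
  also have "\<dots> = (\<Sum>i\<in>{..degree p} \<inter> {nat (-k)}. if k \<le> 0 then coeff p i else 0)"
    by (rule sum.mono_neutral_cong_right) (auto split: if_splits)
  also have "\<dots> = (if k \<le> 0 then coeff p (nat (-k)) else 0)"
    by (cases "nat (-k) \<le> degree p") (auto simp: coeff_eq_0)
  finally show ?thesis .
qed

lemma emb_0 [simp]: "emb 0 = 0"
  and emb_1 [simp]: "emb 1 = 1"
  and emb_add [simp]: "emb (p + q) = emb p + emb q"
  and emb_diff [simp]: "emb (p - q) = emb p - emb q"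
  and emb_uminus [simp]: "emb (- p) = - emb p"
  and emb_smult: "emb (smult c p) = fls_const c * emb p"
  by (auto intro!: fls_eqI simp: emb_nth)

lemma emb_pCons: "emb (pCons c p) = fls_const c + fls_X_inv * emb p"
proof (rule fls_eqI)
  fix k
  show "emb (pCons c p) $$ k = (fls_const c + fls_X_inv * emb p) $$ k"
    unfolding fls_X_inv_times_conv_shift
    by (cases "k < 0") (auto simp: emb_nth coeff_pCons nat_add_distrib nat_diff_distrib split: nat.split)
qed

lemma emb_mult [simp]: "emb (p * q) = emb p * emb q"
  by (induction p) (simp_all add: emb_pCons emb_smult algebra_simps)

lemma emb_numeral [simp]: "emb (numeral k) = numeral k"
  by (induction k rule: num_induct) (simp_all add: numeral_inc del: numeral_plus_one)

lemma emb_eq_0_iff [simp]: "emb p = 0 \<longleftrightarrow> p = 0"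
proof
  assume "emb p = 0"
  then have "coeff p n = 0" for n
    using emb_nth[of p "- int n"] by simp
  then show "p = 0" by (simp add: poly_eq_iff)
qed simp

lemma fls_subdegree_emb [simp]: "fls_subdegree (emb p) = - int (degree p)"
proof (cases "p = 0")
  case False
  show ?thesis
  proof (rule fls_subdegree_eqI)
    show "emb p $$ (- int (degree p)) \<noteq> 0" using False by (simp add: emb_nth)
    show "emb p $$ k = 0" if "k < - int (degree p)" for k
      using that by (simp add: emb_nth coeff_eq_0)
  qed
qed simp

lemma fls_subdegree_add_dominant:
  fixes x y :: "'a::field fls"
  assumes "x \<noteq> 0" "y = 0 \<or> fls_subdegree x < fls_subdegree y"
  shows "x + y \<noteq> 0 \<and> fls_subdegree (x + y) = fls_subdegree x"
proof (cases "y = 0")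
  case False
  then have lt: "fls_subdegree x < fls_subdegree y" using assms by simp
  then have "(x + y) $$ fls_subdegree x \<noteq> 0"
    using assms(1) by (simp add: nth_fls_subdegree_zero_iff)
  then show ?thesis using fls_nonzeroI fls_subdegree_add_eq1[OF assms(1) lt] by blast
qed (use assms in simp)

lemma fls_subdegree_one_div [simp]: "fls_subdegree (1 / x) = - fls_subdegree (x :: 'a::field fls)"
  by (simp add: divide_inverse)

lemma fls_subdegree_one_div_diff:
  fixes x y :: "'a::field fls"
  assumes "x \<noteq> 0" "y \<noteq> 0" "x \<noteq> y"
  shows "1 / x - 1 / y \<noteq> 0 \<and>
    fls_subdegree (1 / x - 1 / y) = fls_subdegree (x - y) - fls_subdegree x - fls_subdegree y"
proof -
  have "1 / x - 1 / y = (y - x) / (x * y)" using assms by (simp add: field_simps)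
  then show ?thesis
    using assms by (simp add: fls_divide_subdegree fls_subdegree_minus_sym)
qed

lemma fls_subdegree_emb_add_small:
  fixes e :: "'a::field fls"
  assumes "d \<noteq> 0" "e = 0 \<or> - int (degree d) < fls_subdegree e"
  shows "emb d + e \<noteq> 0 \<and> fls_subdegree (emb d + e) = - int (degree d)"
  using fls_subdegree_add_dominant[of "emb d" e] assms by auto

section \<open>Finite continued fractions with a tail\<close>

primrec cf_tail :: "(nat \<Rightarrow> 'a::field poly) \<Rightarrow> nat \<Rightarrow> 'a fls \<Rightarrow> 'a fls" where
  "cf_tail c 0 w = emb (c 0) + 1 / w"
| "cf_tail c (Suc n) w = emb (c 0) + 1 / cf_tail (\<lambda>i. c (Suc i)) n w"

primrec cf_tail_defined :: "(nat \<Rightarrow> 'a::field poly) \<Rightarrow> nat \<Rightarrow> 'a fls \<Rightarrow> bool" where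
  "cf_tail_defined c 0 w \<longleftrightarrow> w \<noteq> 0"
| "cf_tail_defined c (Suc n) w \<longleftrightarrow>
     cf_tail_defined (\<lambda>i. c (Suc i)) n w \<and> cf_tail (\<lambda>i. c (Suc i)) n w \<noteq> 0"

lemma cf_tail_cong: "(\<And>i. i \<le> n \<Longrightarrow> c i = c' i) \<Longrightarrow> cf_tail c n w = cf_tail c' n w"
proof (induction n arbitrary: c c')
  case (Suc n)
  have "cf_tail (\<lambda>i. c (Suc i)) n w = cf_tail (\<lambda>i. c' (Suc i)) n w"
    by (rule Suc.IH) (use Suc.prems in auto)
  then show ?case using Suc.prems[of 0] by simp
qed simp

lemma cf_tail_Suc_snoc: "cf_tail c (Suc n) w = cf_tail c n (emb (c (Suc n)) + 1 / w)"
  by (induction n arbitrary: c) simp_all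

lemma cf_tail_defined_Suc_snoc:
  assumes "w \<noteq> 0" "cf_tail_defined c n (emb (c (Suc n)) + 1 / w)"
  shows "cf_tail_defined c (Suc n) w"
  using assms
proof (induction n arbitrary: c)
  case (Suc n)
  have "cf_tail_defined (\<lambda>i. c (Suc i)) (Suc n) w"
    using Suc.IH[of "\<lambda>i. c (Suc i)"] Suc.prems by simp
  moreover have "cf_tail (\<lambda>i. c (Suc i)) (Suc n) w \<noteq> 0"
    using Suc.prems by (simp only: cf_tail_Suc_snoc) simp
  ultimately show ?case by simp
qed simp

lemma cf_tail_subdegree:
  assumes "\<forall>i\<le>n. 1 \<le> degree (c i)" "w \<noteq> 0" "fls_subdegree w \<le> 0"
  shows "cf_tail c n w \<noteq> 0 \<and> fls_subdegree (cf_tail c n w) = - int (degree (c 0))"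
  using assms
proof (induction n arbitrary: c)
  case 0
  have "c 0 \<noteq> 0" using 0 by auto
  moreover have "- int (degree (c 0)) < fls_subdegree (1 / w)" using 0 by auto
  ultimately show ?case using fls_subdegree_emb_add_small[of "c 0" "1 / w"] by simp
next
  case (Suc n)
  have "cf_tail (\<lambda>i. c (Suc i)) n w \<noteq> 0 \<and>
      fls_subdegree (cf_tail (\<lambda>i. c (Suc i)) n w) = - int (degree (c 1))"
    using Suc.IH[of "\<lambda>i. c (Suc i)"] Suc.prems by auto
  moreover have "degree (c 1) \<ge> 1" "c 0 \<noteq> 0" using Suc.prems by auto
  ultimately show ?case
    using fls_subdegree_emb_add_small[of "c 0" "1 / cf_tail (\<lambda>i. c (Suc i)) n w"] by simp
qed

lemma cf_tail_definedI:
  assumes "\<forall>i\<in>{1..n}. 1 \<le> degree (c i)" "w \<noteq> 0" "fls_subdegree w \<le> 0"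
  shows "cf_tail_defined c n w"
  using assms
proof (induction n arbitrary: c)
  case (Suc n)
  have "cf_tail (\<lambda>i. c (Suc i)) n w \<noteq> 0"
    using cf_tail_subdegree[of n "\<lambda>i. c (Suc i)" w] Suc.prems by auto
  moreover have "cf_tail_defined (\<lambda>i. c (Suc i)) n w"
    using Suc.IH[of "\<lambda>i. c (Suc i)"] Suc.prems by auto
  ultimately show ?case by simp
qed simp

text \<open>Each level of the continued fraction contributes the degree of its partial quotient twice,
  through \<open>v(1/x - 1/y) = v(x - y) - v(x) - v(y)\<close>.\<close>

lemma cf_tail_diff_subdegree:
  assumes "\<forall>i\<in>{1..n}. 1 \<le> degree (c i)"
    and "u \<noteq> 0" "u' \<noteq> 0" "fls_subdegree u \<le> 0" "fls_subdegree u' \<le> 0" "u \<noteq> u'"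
  shows "cf_tail c n u \<noteq> cf_tail c n u' \<and>
    fls_subdegree (cf_tail c n u - cf_tail c n u') = fls_subdegree (u - u') - fls_subdegree u
      - fls_subdegree u' + 2 * (\<Sum>i = 1..n. int (degree (c i)))"
  using assms
proof (induction n arbitrary: c)
  case 0
  then show ?case using fls_subdegree_one_div_diff[of u u'] by simp
next
  case (Suc n)
  define d where "d = (\<lambda>i. c (Suc i))"
  have IH: "cf_tail d n u \<noteq> cf_tail d n u' \<and>
    fls_subdegree (cf_tail d n u - cf_tail d n u') = fls_subdegree (u - u') - fls_subdegree u
      - fls_subdegree u' + 2 * (\<Sum>i = 1..n. int (degree (d i)))"
    using Suc.IH[of d] Suc.prems unfolding d_def by auto
  have "\<forall>i\<le>n. 1 \<le> degree (d i)" using Suc.prems unfolding d_def by auto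
  then have "cf_tail d n x \<noteq> 0 \<and> fls_subdegree (cf_tail d n x) = - int (degree (d 0))"
    if "x \<in> {u, u'}" for x
    using cf_tail_subdegree[of n d x] Suc.prems that by auto
  moreover have "(\<Sum>i = 1..Suc n. int (degree (c i))) =
      int (degree (d 0)) + (\<Sum>i = 1..n. int (degree (d i)))"
  proof -
    have "(\<Sum>i = 1..Suc n. int (degree (c i))) = int (degree (c 1)) + (\<Sum>i = Suc 1..Suc n. int (degree (c i)))"
      by (rule sum.atLeast_Suc_atMost) simp
    then show ?thesis unfolding d_def sum.shift_bounds_cl_Suc_ivl by simp
  qed
  ultimately show ?case
    using fls_subdegree_one_div_diff[of "cf_tail d n u" "cf_tail d n u'"] IH
    by (simp add: d_def[symmetric])
qed

section \<open>Continued fractions as Moebius transformations\<close>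

fun cf_mobius :: "(nat \<Rightarrow> 'a::field poly) \<Rightarrow> nat \<Rightarrow> 'a poly \<times> 'a poly \<times> 'a poly \<times> 'a poly" where
  "cf_mobius c 0 = (c 0, 1, 1, 0)"
| "cf_mobius c (Suc n) =
     (case cf_mobius (\<lambda>i. c (Suc i)) n of (P, Q, R, S) \<Rightarrow> (c 0 * P + R, c 0 * Q + S, P, Q))"

lemma cf_tail_mobius:
  assumes "cf_tail_defined c n w" "cf_mobius c n = (P, Q, R, S)"
  shows "emb R * w + emb S \<noteq> 0 \<and> cf_tail c n w = (emb P * w + emb Q) / (emb R * w + emb S)
     \<and> (P * S - Q * R = 1 \<or> P * S - Q * R = -1)"
  using assms
proof (induction n arbitrary: c P Q R S)
  case 0
  then show ?case by (auto simp: field_simps)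
next
  case (Suc n)
  obtain P' Q' R' S' where m: "cf_mobius (\<lambda>i. c (Suc i)) n = (P', Q', R', S')"
    by (metis prod_cases4)
  have PQRS: "P = c 0 * P' + R'" "Q = c 0 * Q' + S'" "R = P'" "S = Q'"
    using Suc.prems(2) m by auto
  have defined: "cf_tail_defined (\<lambda>i. c (Suc i)) n w" "cf_tail (\<lambda>i. c (Suc i)) n w \<noteq> 0"
    using Suc.prems by auto
  have IH: "emb R' * w + emb S' \<noteq> 0 \<and>
      cf_tail (\<lambda>i. c (Suc i)) n w = (emb P' * w + emb Q') / (emb R' * w + emb S')
     \<and> (P' * S' - Q' * R' = 1 \<or> P' * S' - Q' * R' = -1)"
    using Suc.IH[OF defined(1) m] .
  have num: "emb P' * w + emb Q' \<noteq> 0" using IH defined(2) by auto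
  have "cf_tail c (Suc n) w = emb (c 0) + (emb R' * w + emb S') / (emb P' * w + emb Q')"
    using IH by simp
  also have "\<dots> = (emb P * w + emb Q) / (emb R * w + emb S)"
    using num IH unfolding PQRS by (simp add: field_simps)
  finally have "cf_tail c (Suc n) w = (emb P * w + emb Q) / (emb R * w + emb S)" .
  moreover have "P * S - Q * R = - (P' * S' - Q' * R')" unfolding PQRS by (simp add: algebra_simps)
  then have "P * S - Q * R = 1 \<or> P * S - Q * R = -1" using IH by (metis minus_minus)
  ultimately show ?case using IH num PQRS by simp
qed

lemma cf_tail_defined_nonzero: "cf_tail_defined c n w \<Longrightarrow> w \<noteq> 0"
  by (induction n arbitrary: c) auto

lemma cf_tail_mem_Theta:
  assumes "cf_tail_defined c n w"
  shows "cf_tail c n w \<in> Theta (1 / w)"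
proof -
  obtain P Q R S where m: "cf_mobius c n = (P, Q, R, S)" by (metis prod_cases4)
  have rep: "emb R * w + emb S \<noteq> 0" "cf_tail c n w = (emb P * w + emb Q) / (emb R * w + emb S)"
    and det: "P * S - Q * R = 1 \<or> P * S - Q * R = -1"
    using cf_tail_mobius[OF assms m] by auto
  have w: "w \<noteq> 0" using cf_tail_defined_nonzero[OF assms] .
  have den: "emb S * (1 / w) + emb R = (emb R * w + emb S) / w"
    and num: "emb Q * (1 / w) + emb P = (emb P * w + emb Q) / w"
    using w by (simp_all add: field_simps)
  have "cf_tail c n w = (emb Q * (1 / w) + emb P) / (emb S * (1 / w) + emb R)"
    unfolding den num rep(2) using w by simp
  moreover have "emb S * (1 / w) + emb R \<noteq> 0" unfolding den using rep(1) w by simp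
  moreover have "Q * R - P * S = - (P * S - Q * R)" by simp
  then have "Q * R - P * S \<noteq> 0 \<and> degree (Q * R - P * S) = 0"
    using det by (metis degree_1 degree_minus minus_minus one_neq_zero neg_equal_0_iff_equal)
  ultimately show ?thesis unfolding Theta_def by blast
qed

section \<open>Common quadratic equations and Galois conjugates\<close>

definition common_quadratic :: "'a::field fls \<Rightarrow> 'a fls \<Rightarrow> bool" where
  "common_quadratic u u' \<longleftrightarrow> (\<exists>A B C. (A \<noteq> 0 \<or> B \<noteq> 0 \<or> C \<noteq> 0) \<and>
      emb A * u ^ 2 + emb B * u + emb C = 0 \<and> emb A * u' ^ 2 + emb B * u' + emb C = 0)"

text \<open>If \<open>u\<close> is a root of \<open>A X\<^sup>2 + B X + C\<close>, then \<open>c + 1/u\<close> is a root of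
  \<open>C X\<^sup>2 + (B - 2cC) X + (A - Bc + Cc\<^sup>2)\<close>.\<close>

lemma common_quadratic_unfold:
  assumes "common_quadratic u u'" "u \<noteq> 0" "u' \<noteq> 0"
  shows "common_quadratic (emb c + 1 / u) (emb c + 1 / u')"
proof -
  obtain A B C where nontriv: "A \<noteq> 0 \<or> B \<noteq> 0 \<or> C \<noteq> 0"
      and "emb A * u ^ 2 + emb B * u + emb C = 0" "emb A * u' ^ 2 + emb B * u' + emb C = 0"
    using assms(1) unfolding common_quadratic_def by blast
  then have roots: "emb A * x ^ 2 + emb B * x + emb C = 0" if "x \<in> {u, u'}" for x
    using that by blast
  have "emb C * (emb c + 1 / x) ^ 2 + emb (B - c * C - c * C) * (emb c + 1 / x)
      + emb (A - B * c + C * c * c) = 0" if "x \<in> {u, u'}" for x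
  proof -
    have "x \<noteq> 0" using that assms by auto
    then have "emb C * (emb c + 1 / x) ^ 2 + emb (B - c * C - c * C) * (emb c + 1 / x)
        + emb (A - B * c + C * c * c) = (emb A * x ^ 2 + emb B * x + emb C) / x ^ 2"
      by (simp add: field_simps power2_eq_square)
    then show ?thesis using roots[OF that] by simp
  qed
  moreover have "C \<noteq> 0 \<or> B - c * C - c * C \<noteq> 0 \<or> A - B * c + C * c * c \<noteq> 0"
    using nontriv by auto
  ultimately show ?thesis unfolding common_quadratic_def by blast
qed

lemma common_quadratic_cf_tail:
  assumes "cf_tail_defined c n u" "cf_tail_defined c n u'" "common_quadratic u u'"
  shows "common_quadratic (cf_tail c n u) (cf_tail c n u')"
  using assms
proof (induction n arbitrary: c)
  case 0
  then show ?case using common_quadratic_unfold by simp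
next
  case (Suc n)
  then show ?case
    using common_quadratic_unfold[of "cf_tail (\<lambda>i. c (Suc i)) n u" "cf_tail (\<lambda>i. c (Suc i)) n u'"]
    by simp
qed

text \<open>\<open>w\<close> only witnesses that \<open>x \<mapsto> cf_tail c n x\<close> is not the identity.\<close>

lemma common_quadratic_fixed_points:
  assumes "cf_tail_defined c n u" "cf_tail c n u = u"
    and "cf_tail_defined c n u'" "cf_tail c n u' = u'"
    and "cf_tail_defined c n w" "cf_tail c n w \<noteq> w"
  shows "common_quadratic u u'"
proof -
  obtain P Q R S where m: "cf_mobius c n = (P, Q, R, S)" by (metis prod_cases4)
  have fixed: "emb R * x ^ 2 + emb (S - P) * x + emb (- Q) = 0"
    if "cf_tail_defined c n x" "cf_tail c n x = x" for x
  proof -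
    have "emb R * x + emb S \<noteq> 0" "x = (emb P * x + emb Q) / (emb R * x + emb S)"
      using cf_tail_mobius[OF that(1) m] that(2) by auto
    then have "x * (emb R * x + emb S) = emb P * x + emb Q"
      by (metis nonzero_eq_divide_eq mult.commute)
    then show ?thesis by (simp add: algebra_simps power2_eq_square)
  qed
  have "R \<noteq> 0 \<or> S - P \<noteq> 0 \<or> - Q \<noteq> 0"
  proof (rule ccontr)
    assume "\<not> ?thesis"
    then have "cf_tail c n w = w" using cf_tail_mobius[OF assms(5) m] by auto
    then show False using assms(6) by simp
  qed
  then show ?thesis unfolding common_quadratic_def
    using fixed[OF assms(1,2)] fixed[OF assms(3,4)] by blast
qed

lemma in_K_if_linear_root:
  assumes "emb B * u + emb C = 0" "B \<noteq> 0"
  shows "in_K u"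
proof -
  have "u = emb (- C) / emb B" using assms by (simp add: field_simps eq_neg_iff_add_eq_0)
  then show ?thesis unfolding in_K_def using assms(2) by blast
qed

lemma quadratic_equations_proportional:
  assumes "\<not> in_K u"
    and "emb A * u ^ 2 + emb B * u + emb C = 0" "emb A' * u ^ 2 + emb B' * u + emb C' = 0"
  shows "A' * B = A * B'"
proof -
  have "emb (A' * B - A * B') * u + emb (A' * C - A * C') =
      emb A' * (emb A * u ^ 2 + emb B * u + emb C) - emb A * (emb A' * u ^ 2 + emb B' * u + emb C')"
    by (simp add: algebra_simps power2_eq_square)
  also have "\<dots> = 0" using assms(2,3) by simp
  finally show ?thesis using in_K_if_linear_root assms(1) by fastforce
qed

text \<open>\<^const>\<open>galois_conj\<close> picks the conjugate through an arbitrary quadratic equation; since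
  \<open>u \<notin> K\<close>, any two such equations are proportional, so the choice does not matter.\<close>

lemma galois_conj_eqI:
  assumes not_K: "\<not> in_K u" and "u \<noteq> u'" and "common_quadratic u u'"
  shows "galois_conj u = u'"
proof -
  obtain A B C where nontriv: "A \<noteq> 0 \<or> B \<noteq> 0 \<or> C \<noteq> 0"
      and u: "emb A * u ^ 2 + emb B * u + emb C = 0" and u': "emb A * u' ^ 2 + emb B * u' + emb C = 0"
    using assms(3) unfolding common_quadratic_def by blast
  have A: "A \<noteq> 0"
  proof
    assume "A = 0"
    then show False
      using nontriv u in_K_if_linear_root[of B u C] not_K by (cases "B = 0") auto
  qed
  have "(u - u') * (emb A * (u + u') + emb B) = 0"
  proof -
    have "(u - u') * (emb A * (u + u') + emb B) =
        (emb A * u ^ 2 + emb B * u + emb C) - (emb A * u' ^ 2 + emb B * u' + emb C)"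
      by (simp add: algebra_simps power2_eq_square)
    then show ?thesis using u u' by simp
  qed
  then have "emb A * (u + u') + emb B = 0" using assms(2) by simp
  then have u'_eq: "u' = - emb B / emb A - u" using A by (simp add: field_simps eq_neg_iff_add_eq_0)
  define P where "P = (\<lambda>y. \<exists>A B C. A \<noteq> 0 \<and> emb A * u ^ 2 + emb B * u + emb C = 0
                              \<and> y = - emb B / emb A - u)"
  have "P u'" unfolding P_def using A u u'_eq by blast
  then have "P (galois_conj u)" unfolding galois_conj_def P_def[symmetric] by (rule someI)
  then obtain A2 B2 C2 where A2: "A2 \<noteq> 0" and u2: "emb A2 * u ^ 2 + emb B2 * u + emb C2 = 0"
     and conj: "galois_conj u = - emb B2 / emb A2 - u" unfolding P_def by blast
  have "A2 * B = A * B2" by (rule quadratic_equations_proportional[OF not_K u u2])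
  then have "emb B2 / emb A2 = emb B / emb A"
    using A A2 by (simp add: field_simps flip: emb_mult)
  then show ?thesis using conj u'_eq by simp
qed

section \<open>Convergence of infinite continued fractions\<close>

text \<open>The disjunct \<open>x n = L\<close> is needed because \<^term>\<open>fls_subdegree 0 = 0\<close>.\<close>

definition fls_val_tendsto :: "(nat \<Rightarrow> 'a::group_add fls) \<Rightarrow> 'a fls \<Rightarrow> bool" where
  "fls_val_tendsto x L \<longleftrightarrow> (\<forall>K. \<exists>N. \<forall>n\<ge>N. x n = L \<or> K \<le> fls_subdegree (x n - L))"

lemma fls_val_tendsto_LIMSEQ:
  fixes x :: "nat \<Rightarrow> 'a::group_add fls"
  assumes "fls_val_tendsto x L"
  shows "x \<longlonglongrightarrow> L"
proof (rule metric_LIMSEQ_I)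
  fix r :: real
  assume "0 < r"
  then obtain k :: nat where k: "(1/2::real) ^ k < r" using real_arch_pow_inv[of r "1/2"] by auto
  obtain N where N: "\<forall>n\<ge>N. x n = L \<or> int k \<le> fls_subdegree (x n - L)"
    using assms unfolding fls_val_tendsto_def by blast
  have "dist (x n) L < r" if "n \<ge> N" for n
  proof (cases "x n = L")
    case False
    then have ge: "int k \<le> fls_subdegree (x n - L)" using N that by auto
    have "dist (x n) L = inverse (2 ^ nat (fls_subdegree (x n - L)))"
      using False ge by (simp add: dist_fls_def)
    also have "\<dots> \<le> inverse (2 ^ k)"
      using ge by (intro le_imp_inverse_le power_increasing) auto
    also have "\<dots> = (1/2) ^ k" by (simp add: power_one_over inverse_eq_divide)
    finally show ?thesis using k by simp
  qed (use \<open>0 < r\<close> in simp)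
  then show "\<exists>N. \<forall>n\<ge>N. dist (x n) L < r" by blast
qed

lemma fls_val_tendsto_exists:
  fixes x :: "nat \<Rightarrow> 'a::group_add fls"
  assumes stable: "\<And>n k. k \<le> int n \<Longrightarrow> x (Suc n) $$ k = x n $$ k"
    and bounded: "\<And>n k. k < D \<Longrightarrow> x n $$ k = 0"
  shows "\<exists>L. fls_val_tendsto x L"
proof -
  define L where "L = Abs_fls (\<lambda>k. x (nat k) $$ k)"
  have L_nth: "L $$ k = x (nat k) $$ k" for k
    unfolding L_def by (rule nth_Abs_fls_lower_bound[of D]) (use bounded in auto)
  have stable_from: "x n $$ k = x m $$ k" if "k \<le> int m" "m \<le> n" for n m k
    using that(2) by (induction n rule: dec_induct) (use stable that(1) in auto)
  have agree: "L $$ k = x n $$ k" if "k \<le> int n" for n k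
    using stable_from[of k 0 n] stable_from[of k "nat k" n] L_nth that by (cases "k \<le> 0") auto
  have "x n = L \<or> K \<le> fls_subdegree (x n - L)" if "n \<ge> nat K" for n K
  proof (cases "x n = L")
    case False
    then have "int n + 1 \<le> fls_subdegree (x n - L)"
      by (intro fls_subdegree_geI) (use agree in auto)
    then show ?thesis using that by auto
  qed simp
  then show ?thesis unfolding fls_val_tendsto_def by blast
qed

lemma fls_val_tendsto_subdegree:
  fixes x :: "nat \<Rightarrow> 'a::field fls"
  assumes "fls_val_tendsto x L" "\<And>n. x n \<noteq> 0 \<and> fls_subdegree (x n) = d"
  shows "L \<noteq> 0 \<and> fls_subdegree L = d"
proof -
  obtain N where N: "x N = L \<or> d + 1 \<le> fls_subdegree (x N - L)"
    using assms(1) unfolding fls_val_tendsto_def by blast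
  show ?thesis
  proof (cases "x N = L")
    case False
    then have "d + 1 \<le> fls_subdegree (L - x N)" using N by (simp add: fls_subdegree_minus_sym)
    then have "x N + (L - x N) \<noteq> 0 \<and> fls_subdegree (x N + (L - x N)) = fls_subdegree (x N)"
      using fls_subdegree_add_dominant[of "x N" "L - x N"] assms(2) by auto
    then show ?thesis using assms(2) by simp
  qed (use assms(2) in metis)
qed

lemma fls_val_tendsto_one_div:
  fixes x :: "nat \<Rightarrow> 'a::field fls"
  assumes lim: "fls_val_tendsto x L" and x: "\<And>n. x n \<noteq> 0 \<and> fls_subdegree (x n) = d"
  shows "fls_val_tendsto (\<lambda>n. 1 / x n) (1 / L)"
  unfolding fls_val_tendsto_def
proof
  fix K
  have L: "L \<noteq> 0 \<and> fls_subdegree L = d" using fls_val_tendsto_subdegree[OF lim x] .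
  obtain N where N: "\<forall>n\<ge>N. x n = L \<or> K + 2 * d \<le> fls_subdegree (x n - L)"
    using lim unfolding fls_val_tendsto_def by blast
  have "1 / x n = 1 / L \<or> K \<le> fls_subdegree (1 / x n - 1 / L)" if "n \<ge> N" for n
  proof (cases "x n = L")
    case False
    then show ?thesis
      using N[rule_format, OF that] fls_subdegree_one_div_diff[of "x n" L] x[of n] L by simp
  qed simp
  then show "\<exists>N. \<forall>n\<ge>N. 1 / x n = 1 / L \<or> K \<le> fls_subdegree (1 / x n - 1 / L)" by blast
qed

lemma fls_nth_eq_below_subdegree_diff:
  fixes x y :: "'a::group_add fls"
  assumes "k < fls_subdegree (x - y)"
  shows "x $$ k = y $$ k"
proof -
  have "(x - y) $$ k = 0" using assms by (rule fls_eq0_below_subdegree)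
  then show ?thesis by (simp only: fls_minus_nth right_minus_eq)
qed

lemma cf_fin_eq_cf_tail: "cf_fin c (Suc n) = cf_tail c n (emb (c (Suc n)))"
  by (induction n arbitrary: c) simp_all

lemma cf_fin_subdegree:
  assumes "\<forall>i. 1 \<le> degree (c i)"
  shows "cf_fin c n \<noteq> 0 \<and> fls_subdegree (cf_fin c n) = - int (degree (c 0))"
proof (cases n)
  case 0
  have "c 0 \<noteq> 0" using assms by (metis degree_0 not_one_le_zero)
  then show ?thesis using 0 by simp
next
  case (Suc m)
  have "c (Suc m) \<noteq> 0" using assms by (metis degree_0 not_one_le_zero)
  then show ?thesis
    unfolding Suc cf_fin_eq_cf_tail using cf_tail_subdegree[of m c "emb (c (Suc m))"] assms by simp
qed

lemma cf_fin_Suc_diff_subdegree: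
  assumes adm: "cf_admissible c"
  shows "int n < fls_subdegree (cf_fin c (Suc n) - cf_fin c n)"
proof (cases n)
  case 0
  have "c 1 \<noteq> 0" "1 \<le> degree (c 1)" using adm unfolding cf_admissible_def by auto
  then show ?thesis using 0 by simp
next
  case (Suc m)
  have deg: "1 \<le> degree (c i)" if "1 \<le> i" for i using adm that unfolding cf_admissible_def by auto
  then have nz: "c i \<noteq> 0" if "1 \<le> i" for i using that by fastforce
  define u where "u = emb (c (Suc m)) + 1 / emb (c (Suc (Suc m)))"
  define u' where "u' = emb (c (Suc m))"
  have diff: "cf_fin c (Suc n) - cf_fin c n = cf_tail c m u - cf_tail c m u'"
    unfolding u_def u'_def Suc cf_fin_eq_cf_tail cf_tail_Suc_snoc[of c m] by simp
  have u: "u \<noteq> 0 \<and> fls_subdegree u = - int (degree (c (Suc m)))"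
    unfolding u_def using fls_subdegree_emb_add_small[of "c (Suc m)" "1 / emb (c (Suc (Suc m)))"]
      nz deg[of "Suc (Suc m)"] by simp
  have u': "u' \<noteq> 0 \<and> fls_subdegree u' = - int (degree (c (Suc m)))"
    unfolding u'_def using nz by simp
  have uu': "u - u' \<noteq> 0 \<and> fls_subdegree (u - u') = int (degree (c (Suc (Suc m))))"
    unfolding u_def u'_def using nz by simp
  have D: "cf_tail c m u \<noteq> cf_tail c m u' \<and>
    fls_subdegree (cf_tail c m u - cf_tail c m u') = fls_subdegree (u - u') - fls_subdegree u
      - fls_subdegree u' + 2 * (\<Sum>i = 1..m. int (degree (c i)))"
    by (rule cf_tail_diff_subdegree) (use deg u u' uu' in auto)
  have "(\<Sum>i = 1..m. 1) \<le> (\<Sum>i = 1..m. int (degree (c i)))"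
    by (rule sum_mono) (use deg in auto)
  then show ?thesis unfolding diff using D u u' uu' deg[of "Suc m"] deg[of "Suc (Suc m)"] Suc by simp
qed

lemma cf_fin_minus_head:
  assumes "cf_admissible c"
  shows "cf_fin c n = emb (c 0) \<or> 0 < fls_subdegree (cf_fin c n - emb (c 0))"
proof (cases n)
  case (Suc m)
  have "\<forall>i. 1 \<le> degree (c (Suc i))" using assms unfolding cf_admissible_def by auto
  then have "fls_subdegree (1 / cf_fin (\<lambda>i. c (Suc i)) m) = int (degree (c (Suc 0)))"
    using cf_fin_subdegree[of "\<lambda>i. c (Suc i)" m] by simp
  moreover have "1 \<le> degree (c (Suc 0))" using assms unfolding cf_admissible_def by auto
  ultimately have "0 < fls_subdegree (1 / cf_fin (\<lambda>i. c (Suc i)) m)" by simp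
  then show ?thesis using Suc by simp
qed simp

lemma cf_fin_val_tendsto:
  assumes adm: "cf_admissible c"
  shows "fls_val_tendsto (cf_fin c) (cf_value c)"
proof -
  have "\<exists>L. fls_val_tendsto (cf_fin c) L"
  proof (rule fls_val_tendsto_exists)
    show "cf_fin c (Suc n) $$ k = cf_fin c n $$ k" if "k \<le> int n" for n k
      using cf_fin_Suc_diff_subdegree[OF adm, of n] that
      by (intro fls_nth_eq_below_subdegree_diff) simp
    show "cf_fin c n $$ k = 0" if k: "k < - int (degree (c 0))" for n k
    proof -
      have "cf_fin c n $$ k = emb (c 0) $$ k"
      proof (cases "cf_fin c n = emb (c 0)")
        case False
        then have "k < fls_subdegree (cf_fin c n - emb (c 0))"
          using cf_fin_minus_head[OF adm, of n] k by linarith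
        then show ?thesis by (rule fls_nth_eq_below_subdegree_diff)
      qed simp
      then show ?thesis using k by (simp add: emb_nth coeff_eq_0)
    qed
  qed
  then obtain L where L: "fls_val_tendsto (cf_fin c) L" by blast
  then have "cf_value c = L"
    unfolding cf_value_def using fls_val_tendsto_LIMSEQ limI by metis
  then show ?thesis using L by simp
qed

lemma cf_admissible_Suc_nonconst: "cf_admissible c \<Longrightarrow> \<forall>i. 1 \<le> degree (c (Suc i))"
  unfolding cf_admissible_def by simp

lemma cf_value_subdegree:
  assumes "\<forall>i. 1 \<le> degree (c i)"
  shows "cf_value c \<noteq> 0 \<and> fls_subdegree (cf_value c) = - int (degree (c 0))"
proof -
  have "cf_admissible c" using assms unfolding cf_admissible_def by simp
  then show ?thesis
    using fls_val_tendsto_subdegree[OF cf_fin_val_tendsto] cf_fin_subdegree[OF assms] by blast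
qed

lemma cf_value_unfold:
  assumes "cf_admissible c"
  shows "cf_value c = emb (c 0) + 1 / cf_value (\<lambda>i. c (Suc i))"
proof -
  have shift: "\<forall>i. 1 \<le> degree (c (Suc i))" using cf_admissible_Suc_nonconst[OF assms] .
  then have "cf_admissible (\<lambda>i. c (Suc i))" unfolding cf_admissible_def by simp
  then have "fls_val_tendsto (\<lambda>n. 1 / cf_fin (\<lambda>i. c (Suc i)) n) (1 / cf_value (\<lambda>i. c (Suc i)))"
    by (rule fls_val_tendsto_one_div[OF cf_fin_val_tendsto]) (use cf_fin_subdegree[OF shift] in blast)
  then have "fls_val_tendsto (\<lambda>n. cf_fin c (Suc n)) (emb (c 0) + 1 / cf_value (\<lambda>i. c (Suc i)))"
    unfolding fls_val_tendsto_def by simp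
  then have "(\<lambda>n. cf_fin c (Suc n)) \<longlonglongrightarrow> emb (c 0) + 1 / cf_value (\<lambda>i. c (Suc i))"
    by (rule fls_val_tendsto_LIMSEQ)
  then have "cf_fin c \<longlonglongrightarrow> emb (c 0) + 1 / cf_value (\<lambda>i. c (Suc i))"
    by (rule LIMSEQ_imp_Suc)
  then show ?thesis unfolding cf_value_def by (rule limI)
qed

lemma cf_value_eq_cf_tail:
  assumes "cf_admissible c"
  shows "cf_value c = cf_tail c n (cf_value (\<lambda>i. c (i + Suc n)))"
  using assms
proof (induction n arbitrary: c)
  case 0
  then show ?case using cf_value_unfold[of c] by simp
next
  case (Suc n)
  have "cf_admissible (\<lambda>i. c (Suc i))" using Suc.prems unfolding cf_admissible_def by simp
  then show ?case using Suc.IH[of "\<lambda>i. c (Suc i)"] cf_value_unfold[OF Suc.prems] by simp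
qed

text \<open>The Euclidean algorithm: a fraction \<open>P/Q\<close> would make the complete quotients fractions
  with strictly decreasing denominator degrees.\<close>

lemma cf_value_ne_fraction:
  assumes "cf_admissible c" "Q \<noteq> 0"
  shows "cf_value c \<noteq> emb P / emb Q"
  using assms
proof (induction "degree Q" arbitrary: c P Q rule: less_induct)
  case less
  show ?case
  proof
    assume eq: "cf_value c = emb P / emb Q"
    define x where "x = cf_value (\<lambda>i. c (Suc i))"
    define R where "R = P - c 0 * Q"
    have x: "x \<noteq> 0 \<and> fls_subdegree x = - int (degree (c 1))"
      unfolding x_def using cf_value_subdegree[of "\<lambda>i. c (Suc i)"] cf_admissible_Suc_nonconst[OF less.prems(1)]
      by simp
    have inv_x: "1 / x = emb R / emb Q"
      using cf_value_unfold[OF less.prems(1)] eq less.prems(2) unfolding x_def[symmetric] R_def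
      by (simp add: field_simps)
    then have R: "R \<noteq> 0" using x by auto
    have "x = 1 / (1 / x)" by simp
    also have "\<dots> = emb Q / emb R" unfolding inv_x by simp
    finally have x_eq: "x = emb Q / emb R" .
    have "int (degree (c 1)) = int (degree Q) - int (degree R)"
      using arg_cong[OF inv_x, of fls_subdegree] x R less.prems(2) by (simp add: fls_divide_subdegree)
    moreover have "1 \<le> degree (c 1)" using less.prems(1) unfolding cf_admissible_def by simp
    ultimately have "degree R < degree Q" by linarith
    moreover have "cf_admissible (\<lambda>i. c (Suc i))" using less.prems(1) unfolding cf_admissible_def by simp
    ultimately show False using less.hyps R x_eq unfolding x_def by blast
  qed
qed

lemma cf_value_not_in_K: "cf_admissible c \<Longrightarrow> \<not> in_K (cf_value c)"
  unfolding in_K_def using cf_value_ne_fraction by blast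

lemma cf_value_diff_subdegree_head:
  assumes c: "\<forall>i. 1 \<le> degree (c i)" and d: "\<forall>i. 1 \<le> degree (d i)" and "c 0 \<noteq> d 0"
  shows "cf_value c \<noteq> cf_value d \<and>
     fls_subdegree (cf_value c - cf_value d) = - int (degree (c 0 - d 0))"
proof -
  define e where "e = 1 / cf_value (\<lambda>i. c (Suc i)) - 1 / cf_value (\<lambda>i. d (Suc i))"
  have small: "0 < fls_subdegree (1 / cf_value (\<lambda>i. c (Suc i)))"
      "0 < fls_subdegree (1 / cf_value (\<lambda>i. d (Suc i)))"
    using cf_value_subdegree[of "\<lambda>i. c (Suc i)"] cf_value_subdegree[of "\<lambda>i. d (Suc i)"] c d
    by (simp_all add: Suc_le_eq)
  have "e = 0 \<or> 0 < fls_subdegree e"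
    using fls_subdegree_minus[of "1 / cf_value (\<lambda>i. c (Suc i))" "1 / cf_value (\<lambda>i. d (Suc i))"] small
    unfolding e_def by linarith
  then have "e = 0 \<or> - int (degree (c 0 - d 0)) < fls_subdegree e" by auto
  then have "emb (c 0 - d 0) + e \<noteq> 0 \<and> fls_subdegree (emb (c 0 - d 0) + e) = - int (degree (c 0 - d 0))"
    using fls_subdegree_emb_add_small[of "c 0 - d 0" e] assms(3) by simp
  moreover have "cf_value c - cf_value d = emb (c 0 - d 0) + e"
    unfolding e_def using cf_value_unfold[of c] cf_value_unfold[of d] c d
    by (simp add: cf_admissible_def)
  ultimately show ?thesis by (metis right_minus_eq)
qed

text \<open>\<^term>\<open>deg_proximity p q\<close> equals \<open>v(1/p - 1/q)\<close>.\<close>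

definition deg_proximity :: "'a::field poly \<Rightarrow> 'a poly \<Rightarrow> int" where
  "deg_proximity p q = int (degree p) + int (degree q) - int (degree (p - q))"

lemma deg_proximity_pos:
  assumes "1 \<le> degree p" "1 \<le> degree q"
  shows "1 \<le> deg_proximity p q"
  using degree_diff_le_max[of p q] assms unfolding deg_proximity_def by linarith

lemma deg_proximity_eq_min:
  assumes "degree p \<noteq> degree q"
  shows "deg_proximity p q = int (min (degree p) (degree q))"
proof -
  have "degree (p - q) = max (degree p) (degree q)"
    using assms degree_add_eq_left[of "- q" p] degree_add_eq_right[of p "- q"]
    by (cases "degree q < degree p") auto
  then show ?thesis unfolding deg_proximity_def by linarith
qed

lemma cf_value_diff_subdegree:
  assumes c: "\<forall>i. 1 \<le> degree (c i)" and d: "\<forall>i. 1 \<le> degree (d i)"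
    and agree: "\<forall>i<t. c i = d i" and differ: "c t \<noteq> d t"
  shows "cf_value c \<noteq> cf_value d \<and>
    fls_subdegree (cf_value c - cf_value d) = 2 * (\<Sum>i<t. int (degree (c i)))
      + deg_proximity (c t) (d t) - int (degree (c 0)) - int (degree (d 0))"
proof (cases t)
  case 0
  then show ?thesis
    using cf_value_diff_subdegree_head[OF c d] differ unfolding deg_proximity_def by simp
next
  case (Suc n)
  define c' where "c' = cf_value (\<lambda>i. c (i + Suc n))"
  define d' where "d' = cf_value (\<lambda>i. d (i + Suc n))"
  have adm: "cf_admissible c" "cf_admissible d" using c d unfolding cf_admissible_def by auto
  have "cf_value d = cf_tail d n d'" unfolding d'_def by (rule cf_value_eq_cf_tail[OF adm(2)])
  also have "\<dots> = cf_tail c n d'" by (rule cf_tail_cong) (use agree Suc in simp)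
  finally have d_eq: "cf_value d = cf_tail c n d'" .
  have c_eq: "cf_value c = cf_tail c n c'" unfolding c'_def by (rule cf_value_eq_cf_tail[OF adm(1)])
  have c': "c' \<noteq> 0 \<and> fls_subdegree c' = - int (degree (c t))"
    and d': "d' \<noteq> 0 \<and> fls_subdegree d' = - int (degree (d t))"
    unfolding c'_def d'_def
    using cf_value_subdegree[of "\<lambda>i. c (i + Suc n)"] cf_value_subdegree[of "\<lambda>i. d (i + Suc n)"] c d Suc
    by auto
  have c'd': "c' \<noteq> d' \<and> fls_subdegree (c' - d') = - int (degree (c t - d t))"
    unfolding c'_def d'_def
    using cf_value_diff_subdegree_head[of "\<lambda>i. c (i + Suc n)" "\<lambda>i. d (i + Suc n)"] c d differ Suc
    by auto
  have "cf_tail c n c' \<noteq> cf_tail c n d' \<and>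
    fls_subdegree (cf_tail c n c' - cf_tail c n d') = fls_subdegree (c' - d') - fls_subdegree c'
      - fls_subdegree d' + 2 * (\<Sum>i = 1..n. int (degree (c i)))"
    by (rule cf_tail_diff_subdegree) (use c c' d' c'd' in auto)
  moreover have "(\<Sum>i<t. int (degree (c i))) = int (degree (c 0)) + (\<Sum>i = 1..n. int (degree (c i)))"
    unfolding Suc sum.lessThan_Suc_shift by (simp add: sum.atLeast1_atMost_eq)
  moreover have "c 0 = d 0" using agree Suc by simp
  ultimately show ?thesis
    unfolding c_eq d_eq deg_proximity_def using c' d' c'd' by simp
qed

section \<open>Purely periodic continued fractions\<close>

definition periodic_quotients :: "(nat \<Rightarrow> 'a poly) \<Rightarrow> nat \<Rightarrow> nat \<Rightarrow> 'a poly" where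
  "periodic_quotients b s i = b (i mod s + 1)"

definition reversed_quotients :: "(nat \<Rightarrow> 'a poly) \<Rightarrow> nat \<Rightarrow> nat \<Rightarrow> 'a poly" where
  "reversed_quotients b s i = b (s - i mod s)"

lemma periodic_quotients_nonconst:
  assumes "1 \<le> s" "\<forall>i\<in>{1..s}. 1 \<le> degree (b i)"
  shows "1 \<le> degree (periodic_quotients b s i)"
proof -
  have "i mod s + 1 \<in> {1..s}" using assms(1) by (simp add: Suc_leI)
  then show ?thesis using assms(2) unfolding periodic_quotients_def by blast
qed

lemma reversed_quotients_nonconst:
  assumes "1 \<le> s" "\<forall>i\<in>{1..s}. 1 \<le> degree (b i)"
  shows "1 \<le> degree (reversed_quotients b s i)"
proof -
  have "i mod s < s" using assms(1) by simp
  then have "s - i mod s \<in> {1..s}" by auto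
  then show ?thesis using assms(2) unfolding reversed_quotients_def by blast
qed

lemma cf_tail_backward_recurrence:
  assumes rec: "\<And>j. x (Suc j) = emb (c j) + 1 / x j" and nz: "\<And>j. x j \<noteq> 0"
    and d: "\<And>i. i \<le> n \<Longrightarrow> d i = c (n - i)"
  shows "x (Suc n) = cf_tail d n (x 0) \<and> cf_tail_defined d n (x 0)"
  using d
proof (induction n arbitrary: d)
  case 0
  then show ?case using rec[of 0] nz[of 0] by simp
next
  case (Suc n)
  have IH: "x (Suc n) = cf_tail (\<lambda>i. d (Suc i)) n (x 0) \<and> cf_tail_defined (\<lambda>i. d (Suc i)) n (x 0)"
    by (rule Suc.IH) (use Suc.prems in auto)
  then show ?case using rec[of "Suc n"] nz[of "Suc n"] Suc.prems[of 0] by simp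
qed

lemma cf_value_periodic_fixed:
  assumes s: "1 \<le> s" and b: "\<forall>i\<in>{1..s}. 1 \<le> degree (b i)"
  defines "p \<equiv> periodic_quotients b s"
  shows "cf_tail p (s - 1) (cf_value p) = cf_value p"
proof -
  have "cf_admissible p"
    unfolding p_def cf_admissible_def using periodic_quotients_nonconst[OF s b] by blast
  moreover have "(\<lambda>i. p (i + Suc (s - 1))) = p"
    using s by (intro ext) (simp add: p_def periodic_quotients_def)
  ultimately show ?thesis using cf_value_eq_cf_tail[of p "s - 1"] by simp
qed

text \<open>The numbers \<open>x\<^sub>j = -1/[b\<^sub>s\<^sub>-\<^sub>j; b\<^sub>s\<^sub>-\<^sub>j\<^sub>-\<^sub>1, \<dots>]\<close> satisfy \<open>x\<^sub>j\<^sub>+\<^sub>1 = b\<^sub>s\<^sub>-\<^sub>j + 1/x\<^sub>j\<close>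
  and \<open>x\<^sub>s = x\<^sub>0\<close>.\<close>

lemma cf_tail_periodic_reversed_fixed:
  assumes s: "1 \<le> s" and b: "\<forall>i\<in>{1..s}. 1 \<le> degree (b i)"
  defines "p \<equiv> periodic_quotients b s" and "z \<equiv> - 1 / cf_value (reversed_quotients b s)"
  shows "cf_tail p (s - 1) z = z \<and> cf_tail_defined p (s - 1) z"
proof -
  define g where "g = reversed_quotients b s"
  have g_nc: "\<forall>i. 1 \<le> degree (g i)" unfolding g_def using reversed_quotients_nonconst[OF s b] by blast
  define x where "x = (\<lambda>j. - 1 / cf_value (\<lambda>i. g (i + j)))"
  have x_nz: "x j \<noteq> 0" for j
    unfolding x_def using cf_value_subdegree[of "\<lambda>i. g (i + j)"] g_nc by simp
  have x_rec: "x (Suc j) = emb (g j) + 1 / x j" for j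
  proof -
    have "cf_admissible (\<lambda>i. g (i + j))" using g_nc unfolding cf_admissible_def by simp
    then have "cf_value (\<lambda>i. g (i + j)) = emb (g j) + 1 / cf_value (\<lambda>i. g (i + Suc j))"
      using cf_value_unfold[of "\<lambda>i. g (i + j)"] by simp
    then show ?thesis unfolding x_def by (simp add: minus_divide_left[symmetric] del: minus_divide_left)
  qed
  have "x s = cf_tail p (s - 1) (x 0) \<and> cf_tail_defined p (s - 1) (x 0)"
    using cf_tail_backward_recurrence[of x g, OF x_rec x_nz, of "s - 1" p] s
    by (simp add: p_def g_def periodic_quotients_def reversed_quotients_def Suc_diff_Suc)
  moreover have "x s = x 0" "x 0 = z" unfolding x_def g_def z_def reversed_quotients_def by simp_all
  ultimately show ?thesis by simp
qed

text \<open>Galois' theorem: the conjugate of \<open>[b\<^sub>1; b\<^sub>2, \<dots>]\<close> is \<open>-1/[b\<^sub>s; b\<^sub>s\<^sub>-\<^sub>1, \<dots>]\<close>.\<close>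

lemma common_quadratic_periodic_reversed:
  assumes s: "1 \<le> s" and b: "\<forall>i\<in>{1..s}. 1 \<le> degree (b i)"
  shows "common_quadratic (cf_value (periodic_quotients b s)) (- 1 / cf_value (reversed_quotients b s))"
proof -
  define p where "p = periodic_quotients b s"
  have p_nc: "\<forall>i. 1 \<le> degree (p i)" unfolding p_def using periodic_quotients_nonconst[OF s b] by blast
  have p_defined: "cf_tail_defined p (s - 1) w" if "w \<noteq> 0" "fls_subdegree w \<le> 0" for w
    by (rule cf_tail_definedI) (use p_nc that in auto)
  have p_0: "p 0 = b 1" unfolding p_def periodic_quotients_def by simp
  have \<beta>: "cf_value p \<noteq> 0" "fls_subdegree (cf_value p) \<le> 0"
    using cf_value_subdegree[OF p_nc] by simp_all
  define w :: "'a fls" where "w = fls_X_inv ^ (degree (b 1) + 1)"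
  have w: "w \<noteq> 0" "fls_subdegree w = - int (degree (b 1) + 1)" unfolding w_def by simp_all
  then have "cf_tail p (s - 1) w \<noteq> w"
    using cf_tail_subdegree[of "s - 1" p w] p_nc p_0 by auto
  moreover have "cf_tail_defined p (s - 1) w" using p_defined w by simp
  moreover note cf_tail_periodic_reversed_fixed[OF s b, folded p_def]
  ultimately show ?thesis unfolding p_def[symmetric]
    using common_quadratic_fixed_points[OF p_defined[OF \<beta>] cf_value_periodic_fixed[OF s b, folded p_def]]
    by blast
qed

lemma per_word_Suc: "per_word b s (Suc i) = periodic_quotients b s i"
  unfolding per_word_def periodic_quotients_def by simp

lemma s'_of_eq: "1 \<le> s \<Longrightarrow> s'_of s t = t mod s + 1"
  unfolding s'_of_def s0_of_def by (cases "t mod s = 0") simp_all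

lemma periodic_quotients_eq_s'_of: "1 \<le> s \<Longrightarrow> periodic_quotients b s t = b (s'_of s t)"
  unfolding periodic_quotients_def by (simp add: s'_of_eq)

lemma prefix_match_mono: "prefix_match a b s r t' \<Longrightarrow> t \<le> t' \<Longrightarrow> prefix_match a b s r t"
  unfolding prefix_match_def by auto

lemma prefix_match_Suc:
  "prefix_match a b s r (Suc t) \<longleftrightarrow> prefix_match a b s r t \<and> a (r + Suc t) = per_word b s (Suc t)"
  unfolding prefix_match_def by (auto simp: atLeastAtMostSuc_conv)

lemma largest_match_iff:
  "largest_match a b s r t \<longleftrightarrow> prefix_match a b s r t \<and> \<not> prefix_match a b s r (Suc t)"
proof
  assume "prefix_match a b s r t \<and> \<not> prefix_match a b s r (Suc t)"
  moreover have "t' \<le> t" if "prefix_match a b s r t'" "\<not> prefix_match a b s r (Suc t)" for t'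
    using prefix_match_mono[OF that(1), of "Suc t"] that(2) by linarith
  ultimately show "largest_match a b s r t" unfolding largest_match_def by blast
qed (auto simp: largest_match_def)

lemma largest_match_unique: "largest_match a b s r t \<Longrightarrow> largest_match a b s r t' \<Longrightarrow> t = t'"
  unfolding largest_match_def by (simp add: le_antisym)

lemma largest_match_0_iff: "largest_match a b s r 0 \<longleftrightarrow> a (r + 1) \<noteq> b 1"
  unfolding largest_match_iff prefix_match_Suc by (simp add: prefix_match_def per_word_def)

lemma s'_of_0: "1 \<le> s \<Longrightarrow> s'_of s 0 = 1"
  by (simp add: s'_of_eq)

lemma largest_match_exists:
  assumes "\<not> prefix_match a b s r n"
  shows "\<exists>t. largest_match a b s r t"
  using assms
proof (induction n)
  case 0
  then show ?case unfolding prefix_match_def by simp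
next
  case (Suc n)
  then show ?case using largest_match_iff by blast
qed

lemma alpha_seq_eq_if_prefix_match_all:
  assumes "\<forall>t. prefix_match a b s r t"
  shows "alpha_seq a b s r = a"
proof
  fix n
  show "alpha_seq a b s r n = a n"
  proof (cases "n \<le> r")
    case False
    then have "n - r \<in> {1..n - r}" by simp
    then have "a (r + (n - r)) = per_word b s (n - r)"
      using assms unfolding prefix_match_def by blast
    then show ?thesis using False by (simp add: alpha_seq_def per_word_def)
  qed (simp add: alpha_seq_def)
qed

section \<open>Approximation by \<open>\<alpha>\<^sub>r\<close> and its conjugate\<close>

locale periodic_approximation =
  fixes a b :: "nat \<Rightarrow> 'a::field poly" and s r :: nat
  assumes b_nonconst: "\<forall>i\<in>{1..s}. 1 \<le> degree (b i)"
    and period_pos: "1 \<le> s"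
    and a_admissible: "cf_admissible a"
    and r_pos: "1 \<le> r"
    and a_r_ne_b_s: "a r \<noteq> b s"
begin

abbreviation \<beta> :: "'a fls" where
  "\<beta> \<equiv> cf_value (periodic_quotients b s)"

abbreviation \<beta>_conj :: "'a fls" where
  "\<beta>_conj \<equiv> - 1 / cf_value (reversed_quotients b s)"

lemma periodic_nonconst: "1 \<le> degree (periodic_quotients b s i)"
  and reversed_nonconst: "1 \<le> degree (reversed_quotients b s i)"
  using periodic_quotients_nonconst reversed_quotients_nonconst period_pos b_nonconst by auto

lemma a_nonconst: "1 \<le> i \<Longrightarrow> 1 \<le> degree (a i)"
  using a_admissible unfolding cf_admissible_def by blast

lemma b_s_nonconst: "1 \<le> degree (b s)"
  using b_nonconst period_pos by auto

lemma \<beta>_subdegree: "\<beta> \<noteq> 0 \<and> fls_subdegree \<beta> = - int (degree (b 1))"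
  using cf_value_subdegree[of "periodic_quotients b s"] periodic_nonconst
  by (simp add: periodic_quotients_def)

lemma \<beta>_conj_subdegree: "\<beta>_conj \<noteq> 0 \<and> fls_subdegree \<beta>_conj = int (degree (b s))"
  using cf_value_subdegree[of "reversed_quotients b s"] reversed_nonconst
  by (simp add: reversed_quotients_def minus_divide_left[symmetric] del: minus_divide_left)

lemma a_r_plus_inv_\<beta>_subdegree:
  "emb (a r) + 1 / \<beta> \<noteq> 0 \<and> fls_subdegree (emb (a r) + 1 / \<beta>) = - int (degree (a r))"
proof -
  have "a r \<noteq> 0" using a_nonconst[OF r_pos] by auto
  then show ?thesis
    using fls_subdegree_emb_add_small[of "a r" "1 / \<beta>"] \<beta>_subdegree a_nonconst[OF r_pos] by simp
qed

lemma a_r_plus_inv_\<beta>_conj_subdegree: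
  "emb (a r) + 1 / \<beta>_conj \<noteq> 0 \<and>
    fls_subdegree (emb (a r) + 1 / \<beta>_conj) = - int (degree (a r - b s))"
proof -
  define \<gamma>' where "\<gamma>' = cf_value (\<lambda>i. reversed_quotients b s (Suc i))"
  have "cf_admissible (reversed_quotients b s)"
    using reversed_nonconst unfolding cf_admissible_def by simp
  then have eq: "emb (a r) + 1 / \<beta>_conj = emb (a r - b s) + - (1 / \<gamma>')"
    unfolding \<gamma>'_def using cf_value_unfold[of "reversed_quotients b s"]
    by (simp add: reversed_quotients_def)
  have "0 < fls_subdegree (- (1 / \<gamma>'))"
    unfolding \<gamma>'_def using cf_value_subdegree[of "\<lambda>i. reversed_quotients b s (Suc i)"] reversed_nonconst
    by (simp add: Suc_le_eq)
  then show ?thesis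
    unfolding eq by (intro fls_subdegree_emb_add_small) (use a_r_ne_b_s in auto)
qed

lemma cf_tail_snoc_last: "cf_tail a r w = cf_tail a (r - 1) (emb (a r) + 1 / w)"
  using cf_tail_Suc_snoc[of a "r - 1" w] r_pos by simp

lemma cf_tail_defined_\<beta>: "cf_tail_defined a r \<beta>"
  by (rule cf_tail_definedI) (use a_nonconst \<beta>_subdegree in auto)

lemma cf_tail_defined_\<beta>_conj: "cf_tail_defined a r \<beta>_conj"
proof -
  have "cf_tail_defined a (r - 1) (emb (a r) + 1 / \<beta>_conj)"
    by (rule cf_tail_definedI) (use a_nonconst a_r_plus_inv_\<beta>_conj_subdegree in auto)
  then show ?thesis
    using cf_tail_defined_Suc_snoc[of \<beta>_conj a "r - 1"] \<beta>_conj_subdegree r_pos by simp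
qed

lemma alpha_seq_admissible: "cf_admissible (alpha_seq a b s r)"
  unfolding cf_admissible_def alpha_seq_def
  using a_nonconst periodic_nonconst by (auto simp: periodic_quotients_def)

lemma cf_value_alpha_seq: "cf_value (alpha_seq a b s r) = cf_tail a r \<beta>"
proof -
  have "cf_value (alpha_seq a b s r) =
      cf_tail (alpha_seq a b s r) r (cf_value (\<lambda>i. alpha_seq a b s r (i + Suc r)))"
    by (rule cf_value_eq_cf_tail[OF alpha_seq_admissible])
  moreover have "(\<lambda>i. alpha_seq a b s r (i + Suc r)) = periodic_quotients b s"
    by (rule ext) (simp add: alpha_seq_def periodic_quotients_def)
  moreover have "cf_tail (alpha_seq a b s r) r w = cf_tail a r w" for w
    by (rule cf_tail_cong) (simp add: alpha_seq_def)
  ultimately show ?thesis by simp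
qed

lemma alpha_conj_diff_subdegree:
  "cf_tail a r \<beta> \<noteq> cf_tail a r \<beta>_conj \<and>
    fls_subdegree (cf_tail a r \<beta> - cf_tail a r \<beta>_conj) =
      2 * (\<Sum>i = 1..r. int (degree (a i))) - deg_proximity (a r) (b s)"
proof -
  define Y where "Y = emb (a r) + 1 / \<beta>"
  define Y' where "Y' = emb (a r) + 1 / \<beta>_conj"
  have Y: "Y \<noteq> 0 \<and> fls_subdegree Y = - int (degree (a r))"
    unfolding Y_def by (rule a_r_plus_inv_\<beta>_subdegree)
  have Y': "Y' \<noteq> 0 \<and> fls_subdegree Y' = - int (degree (a r - b s))"
    unfolding Y'_def by (rule a_r_plus_inv_\<beta>_conj_subdegree)
  have "\<beta> + - \<beta>_conj \<noteq> 0 \<and> fls_subdegree (\<beta> + - \<beta>_conj) = fls_subdegree \<beta>"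
    using fls_subdegree_add_dominant[of \<beta> "- \<beta>_conj"] \<beta>_subdegree \<beta>_conj_subdegree b_s_nonconst
    by simp
  then have "\<beta> \<noteq> \<beta>_conj" "fls_subdegree (\<beta> - \<beta>_conj) = fls_subdegree \<beta>" by auto
  then have "1 / \<beta> - 1 / \<beta>_conj \<noteq> 0 \<and> fls_subdegree (1 / \<beta> - 1 / \<beta>_conj) = - int (degree (b s))"
    using fls_subdegree_one_div_diff[of \<beta> \<beta>_conj] \<beta>_subdegree \<beta>_conj_subdegree by simp
  moreover have "Y - Y' = 1 / \<beta> - 1 / \<beta>_conj" unfolding Y_def Y'_def by simp
  ultimately have YY': "Y \<noteq> Y'" "fls_subdegree (Y - Y') = - int (degree (b s))" by auto
  have "cf_tail a (r - 1) Y \<noteq> cf_tail a (r - 1) Y' \<and>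
    fls_subdegree (cf_tail a (r - 1) Y - cf_tail a (r - 1) Y') = fls_subdegree (Y - Y')
      - fls_subdegree Y - fls_subdegree Y' + 2 * (\<Sum>i = 1..r - 1. int (degree (a i)))"
    by (rule cf_tail_diff_subdegree) (use a_nonconst Y Y' YY' in auto)
  moreover have "(\<Sum>i = 1..r. int (degree (a i))) = (\<Sum>i = 1..r - 1. int (degree (a i))) + int (degree (a r))"
    using r_pos by (cases r) simp_all
  ultimately show ?thesis
    unfolding cf_tail_snoc_last[of \<beta>] cf_tail_snoc_last[of \<beta>_conj] Y_def[symmetric] Y'_def[symmetric]
    using Y Y' YY' by (simp add: deg_proximity_def)
qed

lemma galois_conj_alpha: "galois_conj (cf_value (alpha_seq a b s r)) = cf_tail a r \<beta>_conj"
proof -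
  have "common_quadratic (cf_tail a r \<beta>) (cf_tail a r \<beta>_conj)"
    using common_quadratic_cf_tail[OF cf_tail_defined_\<beta> cf_tail_defined_\<beta>_conj]
      common_quadratic_periodic_reversed[OF period_pos b_nonconst] by simp
  then show ?thesis
    using galois_conj_eqI cf_value_not_in_K[OF alpha_seq_admissible] alpha_conj_diff_subdegree
    unfolding cf_value_alpha_seq by blast
qed

lemma f_alpha_diff_subdegree:
  assumes "prefix_match a b s r t" "\<not> prefix_match a b s r (Suc t)"
  shows "cf_value a \<noteq> cf_tail a r \<beta> \<and>
    fls_subdegree (cf_value a - cf_tail a r \<beta>) = 2 * (\<Sum>i = 1..r. int (degree (a i)))
      + 2 * (\<Sum>j = 1..t. int (degree (a (r + j)))) + deg_proximity (a (r + t + 1)) (b (s'_of s t))"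
proof -
  define f' where "f' = cf_value (\<lambda>i. a (i + Suc r))"
  have a': "\<forall>i. 1 \<le> degree (a (i + Suc r))" using a_nonconst by simp
  have agree: "a (i + Suc r) = periodic_quotients b s i" if "i < t" for i
  proof -
    have "Suc i \<in> {1..t}" using that by simp
    then have "a (r + Suc i) = per_word b s (Suc i)" using assms(1) unfolding prefix_match_def by blast
    then show ?thesis by (simp add: per_word_Suc add.commute)
  qed
  have differ: "a (t + Suc r) \<noteq> periodic_quotients b s t"
    using assms prefix_match_Suc[of a b s r t] by (simp add: per_word_Suc add.commute)
  have f'\<beta>: "f' \<noteq> \<beta>" "fls_subdegree (f' - \<beta>) = 2 * (\<Sum>i<t. int (degree (a (i + Suc r))))
      + deg_proximity (a (t + Suc r)) (periodic_quotients b s t) - int (degree (a (Suc r)))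
      - int (degree (b 1))"
    unfolding f'_def using cf_value_diff_subdegree[OF a', of "periodic_quotients b s" t]
      periodic_nonconst agree differ by (simp_all add: periodic_quotients_def)
  have f': "f' \<noteq> 0" "fls_subdegree f' = - int (degree (a (Suc r)))"
    unfolding f'_def using cf_value_subdegree[OF a'] by simp_all
  have "cf_tail a r f' \<noteq> cf_tail a r \<beta> \<and>
    fls_subdegree (cf_tail a r f' - cf_tail a r \<beta>) = fls_subdegree (f' - \<beta>) - fls_subdegree f'
      - fls_subdegree \<beta> + 2 * (\<Sum>i = 1..r. int (degree (a i)))"
    using cf_tail_diff_subdegree[of r a f' \<beta>] a_nonconst \<beta>_subdegree f' f'\<beta>(1) by auto
  moreover have "(\<Sum>i<t. int (degree (a (i + Suc r)))) = (\<Sum>j = 1..t. int (degree (a (r + j))))"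
    by (simp add: sum.atLeast1_atMost_eq add.commute)
  moreover have "cf_value a = cf_tail a r f'"
    unfolding f'_def by (rule cf_value_eq_cf_tail[OF a_admissible])
  ultimately show ?thesis
    using f'\<beta>(2) f'(2) \<beta>_subdegree periodic_quotients_eq_s'_of[OF period_pos, of b t]
    by (simp add: add.commute)
qed

lemma cf_value_in_Theta_if_prefix_match_all:
  assumes "\<forall>t. prefix_match a b s r t"
  shows "cf_value a \<in> Theta (cf_value (per_word b s))"
proof -
  have "1 \<le> degree (per_word b s i)" if "1 \<le> i" for i
    using that periodic_nonconst[of "i - 1"] by (cases i) (simp_all add: per_word_Suc)
  then have "cf_admissible (per_word b s)" unfolding cf_admissible_def by blast
  moreover have "(\<lambda>i. per_word b s (Suc i)) = periodic_quotients b s" by (rule ext) (rule per_word_Suc)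
  moreover have "per_word b s 0 = 0" by (simp add: per_word_def)
  ultimately have "cf_value (per_word b s) = 1 / \<beta>"
    using cf_value_unfold[of "per_word b s"] by simp
  then show ?thesis
    using cf_tail_mem_Theta[OF cf_tail_defined_\<beta>] cf_value_alpha_seq
      alpha_seq_eq_if_prefix_match_all[OF assms] by simp
qed

lemma approximation_exponent_ge_2:
  "2 \<le> 2 * (\<Sum>j = 1..t. int (degree (a (r + j))))
      + deg_proximity (a r) (b s) + deg_proximity (a (r + t + 1)) (b (s'_of s t))"
proof -
  have "s'_of s t \<in> {1..s}" using period_pos by (simp add: s'_of_eq Suc_leI)
  then have "1 \<le> deg_proximity (a (r + t + 1)) (b (s'_of s t))" "1 \<le> deg_proximity (a r) (b s)"
    using b_nonconst a_nonconst r_pos b_s_nonconst by (auto intro: deg_proximity_pos)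
  moreover have "0 \<le> (\<Sum>j = 1..t. int (degree (a (r + j))))" by (rule sum_nonneg) simp
  ultimately show ?thesis by linarith
qed

lemma largest_match_exists_if_not_in_Theta:
  assumes "cf_value a \<notin> Theta (cf_value (per_word b s))"
  shows "\<exists>t. largest_match a b s r t"
  using largest_match_exists cf_value_in_Theta_if_prefix_match_all assms by blast

end

lemma two_le_card_field: "2 \<le> CARD('a::{finite,field})"
proof -
  have "card {0::'a, 1} \<le> CARD('a)" by (rule card_mono) auto
  then show ?thesis by simp
qed

lemma absv_div_eq_powr:
  fixes x y :: "'a::{finite,field} fls"
  assumes "x \<noteq> 0" "y \<noteq> 0"
  shows "absv x / absv y = real CARD('a) powr (- real_of_int (fls_subdegree x - fls_subdegree y))"
  unfolding absv_def using assms by (simp add: powr_diff[symmetric])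

lemma approximation_quality:
  fixes a b :: "nat \<Rightarrow> 'a::{finite,field} poly"
  assumes "periodic_approximation a b s r" "largest_match a b s r t"
  defines "\<alpha> \<equiv> cf_value (alpha_seq a b s r)"
  shows "absv (cf_value a - \<alpha>) / absv (\<alpha> - galois_conj \<alpha>) =
    real CARD('a) powr - real_of_int (2 * (\<Sum>j = 1..t. int (degree (a (r + j))))
      + deg_proximity (a r) (b s) + deg_proximity (a (r + t + 1)) (b (s'_of s t)))"
proof -
  interpret periodic_approximation a b s r by fact
  have t: "prefix_match a b s r t" "\<not> prefix_match a b s r (Suc t)"
    using assms(2) unfolding largest_match_iff by auto
  define x where "x = cf_value a - cf_tail a r \<beta>"
  define y where "y = cf_tail a r \<beta> - cf_tail a r \<beta>_conj"
  have "x \<noteq> 0" "y \<noteq> 0"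
    unfolding x_def y_def using f_alpha_diff_subdegree[OF t] alpha_conj_diff_subdegree by auto
  then have "absv x / absv y = real CARD('a) powr - real_of_int (fls_subdegree x - fls_subdegree y)"
    by (rule absv_div_eq_powr)
  also have "fls_subdegree x - fls_subdegree y = 2 * (\<Sum>j = 1..t. int (degree (a (r + j))))
      + deg_proximity (a r) (b s) + deg_proximity (a (r + t + 1)) (b (s'_of s t))"
    unfolding x_def y_def using f_alpha_diff_subdegree[OF t] alpha_conj_diff_subdegree by simp
  finally show ?thesis
    unfolding \<alpha>_def galois_conj_alpha unfolding cf_value_alpha_seq x_def y_def .
qed

theorem corollary2p4:
  fixes a b :: "nat \<Rightarrow> 'a::{finite,field} poly"
    and s r :: nat
    and f \<tau> \<alpha> :: "'a fls"
    and \<rho> :: real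
  assumes b_nonconst: "\<forall>i\<in>{1..s}. degree (b i) \<ge> 1"
    and b_period: "shortest_period b s"
    and tau_def: "\<tau> = cf_value (per_word b s)"
    and a_adm: "cf_admissible a"
    and f_def: "f = cf_value a"
    and f_notK: "\<not> in_K f"
    and f_notTheta: "f \<notin> Theta \<tau>"
    and r_pos: "r \<ge> 1"
    and ar_ne: "a r \<noteq> b s"
    and alpha_def: "\<alpha> = cf_value (alpha_seq a b s r)"
    and rho_def: "\<rho> = absv (f - \<alpha>) / absv (\<alpha> - galois_conj \<alpha>)"
  shows
    "(a (r + 1) \<noteq> b 1 \<longrightarrow>
        - log (real (CARD('a))) \<rho> =
          real_of_int (int (degree (a r)) + int (degree (b s)) - int (degree (a r - b s))
            + int (degree (a (r + 1))) + int (degree (b 1)) - int (degree (a (r + 1) - b 1))))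
     \<and> (a (r + 1) = b 1 \<longrightarrow>
        (\<exists>t. largest_match a b s r t) \<and>
        (\<forall>t. largest_match a b s r t \<longrightarrow>
          - log (real (CARD('a))) \<rho> =
            real_of_int (2 * (\<Sum>j = 1..t. int (degree (a (r + j))))
              + int (degree (a r)) + int (degree (b s)) - int (degree (a r - b s))
              + int (degree (a (r + t + 1))) + int (degree (b (s'_of s t)))
              - int (degree (a (r + t + 1) - b (s'_of s t))))))
     \<and> \<rho> \<le> real (CARD('a)) powr (-2)
     \<and> (\<forall>t s'. ((a (r + 1) \<noteq> b 1 \<and> t = 0 \<and> s' = 1) \<or>
                (a (r + 1) = b 1 \<and> largest_match a b s r t \<and> s' = s'_of s t)) \<longrightarrow>
          degree (a r) \<noteq> degree (b s) \<longrightarrow>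
          degree (a (r + t + 1)) \<noteq> degree (b s') \<longrightarrow>
          - log (real (CARD('a))) \<rho> =
            real_of_int (2 * (\<Sum>j = 1..t. int (degree (a (r + j))))
              + int (min (degree (a r)) (degree (b s)))
              + int (min (degree (a (r + t + 1))) (degree (b s')))))"
proof -
  have s: "1 \<le> s" using b_period unfolding shortest_period_def by simp
  have pa: "periodic_approximation a b s r"
    by unfold_locales (use b_nonconst s a_adm r_pos ar_ne in auto)
  define X where "X t = 2 * (\<Sum>j = 1..t. int (degree (a (r + j))))
      + deg_proximity (a r) (b s) + deg_proximity (a (r + t + 1)) (b (s'_of s t))" for t
  obtain t0 where t0: "largest_match a b s r t0"
    using periodic_approximation.largest_match_exists_if_not_in_Theta[OF pa] f_notTheta
    unfolding f_def tau_def by blast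
  then have t0_iff: "largest_match a b s r t \<longleftrightarrow> t = t0" for t
    using largest_match_unique by blast
  have \<rho>: "\<rho> = real CARD('a) powr - real_of_int (X t0)"
    using approximation_quality[OF pa t0] unfolding rho_def f_def alpha_def X_def .
  have q: "1 < real CARD('a)" using two_le_card_field[where 'a='a] by linarith
  have "\<rho> \<le> real CARD('a) powr (-2)"
    using \<rho> q periodic_approximation.approximation_exponent_ge_2[OF pa, of t0, folded X_def]
    by (simp add: powr_mono)
  moreover have "- log (real CARD('a)) \<rho> = X t0" using \<rho> q by simp
  ultimately show ?thesis
    using largest_match_0_iff[of a b s r] s'_of_0[OF s]
    by (auto simp: t0_iff X_def deg_proximity_def deg_proximity_eq_min[unfolded deg_proximity_def, symmetric])
qed

end
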